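(* Let $R$ and $S$ be finite connected racks, and let $T$ be a finite rack containing an element $t$ with $t\rhd t=t$ (for example, a non-empty quandle). If there exists an isomorphism of racks $R\times T\cong S\times T$, then $R\cong S$.
   Context: A rack is a set $R$ with a binary operation $\rhd$ such that every left multiplication $\ell_a\colon b\mapsto a\rhd b$ is a bijection and $a\rhd(b\rhd c)=(a\rhd b)\rhd(a\rhd c)$ for all $a,b,c$. A quandle is a rack with $a\rhd a=a$ for all $a$. The product $R\times T$ of racks is the cartesian product with componentwise operation. The inner automorphism group $\mathrm{Inn}(R)$ is the subgroup of the symmetric group on $R$ generated by all $\ell_a$; a rack is connected if it is non-empty and $\mathrm{Inn}(R)$ acts transitively on $R$. *)

theory Defs
  imports Main
begin

definition rack :: "'a set \<Rightarrow> ('a \<Rightarrow> 'a \<Rightarrow> 'a) \<Rightarrow> bool" where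
  "rack R op \<longleftrightarrow>
     (\<forall>a\<in>R. \<forall>b\<in>R. op a b \<in> R) \<and>
     (\<forall>a\<in>R. bij_betw (op a) R R) \<and>
     (\<forall>a\<in>R. \<forall>b\<in>R. \<forall>c\<in>R. op a (op b c) = op (op a b) (op a c))"

definition lmult :: "'a set \<Rightarrow> ('a \<Rightarrow> 'a \<Rightarrow> 'a) \<Rightarrow> 'a \<Rightarrow> 'a \<Rightarrow> 'a" where
  "lmult R op a = (\<lambda>b. if b \<in> R then op a b else b)"

text \<open>The inner automorphism group: the subgroup of the symmetric group on
  the carrier generated by all left multiplications (closure of the identity
  under composition with generators and their inverses).\<close>
inductive_set Inn :: "'a set \<Rightarrow> ('a \<Rightarrow> 'a \<Rightarrow> 'a) \<Rightarrow> ('a \<Rightarrow> 'a) set"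
  for R op where
  Inn_id: "id \<in> Inn R op"
| Inn_mult: "\<lbrakk>g \<in> Inn R op; a \<in> R\<rbrakk> \<Longrightarrow> lmult R op a \<circ> g \<in> Inn R op"
| Inn_inv: "\<lbrakk>g \<in> Inn R op; a \<in> R\<rbrakk> \<Longrightarrow> inv (lmult R op a) \<circ> g \<in> Inn R op"

definition connected_rack :: "'a set \<Rightarrow> ('a \<Rightarrow> 'a \<Rightarrow> 'a) \<Rightarrow> bool" where
  "connected_rack R op \<longleftrightarrow> rack R op \<and> R \<noteq> {} \<and>
     (\<forall>x\<in>R. \<forall>y\<in>R. \<exists>g\<in>Inn R op. g x = y)"

definition prod_op :: "('a \<Rightarrow> 'a \<Rightarrow> 'a) \<Rightarrow> ('b \<Rightarrow> 'b \<Rightarrow> 'b)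
    \<Rightarrow> ('a \<times> 'b) \<Rightarrow> ('a \<times> 'b) \<Rightarrow> ('a \<times> 'b)" where
  "prod_op op1 op2 = (\<lambda>(a, b) (c, d). (op1 a c, op2 b d))"

definition rack_iso :: "'a set \<Rightarrow> ('a \<Rightarrow> 'a \<Rightarrow> 'a) \<Rightarrow> 'b set \<Rightarrow> ('b \<Rightarrow> 'b \<Rightarrow> 'b)
    \<Rightarrow> ('a \<Rightarrow> 'b) \<Rightarrow> bool" where
  "rack_iso R op1 S op2 f \<longleftrightarrow> bij_betw f R S \<and>
     (\<forall>a\<in>R. \<forall>b\<in>R. f (op1 a b) = op2 (f a) (f b))"

end

theory Submission
  imports Defs "HOL-Library.FuncSet"
begin

text \<open>Lovasz's counting argument. For a finite magma \<open>X\<close> and a relation \<open>\<theta>\<close> on \<open>X\<close>, let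
  \<open>h\<^sub>\<theta>(A)\<close> be the number of homomorphisms \<open>X \<rightarrow> A\<close> that identify all pairs in \<open>\<theta>\<close>.
  It is multiplicative, \<open>h\<^sub>\<theta>(A \<times> C) = h\<^sub>\<theta>(A) h\<^sub>\<theta>(C)\<close>, and \<open>h\<^sub>\<theta>(C) > 0\<close> as soon as \<open>C\<close>
  has an idempotent (take the constant map), so \<open>A \<times> C \<cong> B \<times> C\<close> forces \<open>h\<^sub>\<theta>(A) = h\<^sub>\<theta>(B)\<close>
  for all \<open>\<theta>\<close>. Moebius inversion over the relations containing \<open>\<theta>\<close> yields the same for
  the number of homomorphisms with kernel exactly \<open>\<theta>\<close>. Taking \<open>X = A\<close> and \<open>\<theta>\<close> the
  diagonal, the identity of \<open>A\<close> produces an injective homomorphism \<open>A \<rightarrow> B\<close>, which is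
  bijective because \<open>|A| = |B|\<close>.\<close>

definition magma :: "'a set \<Rightarrow> ('a \<Rightarrow> 'a \<Rightarrow> 'a) \<Rightarrow> bool" where
  "magma X op \<longleftrightarrow> (\<forall>a\<in>X. \<forall>b\<in>X. op a b \<in> X)"

definition homs :: "'a set \<Rightarrow> ('a \<Rightarrow> 'a \<Rightarrow> 'a) \<Rightarrow> 'b set \<Rightarrow> ('b \<Rightarrow> 'b \<Rightarrow> 'b) \<Rightarrow> ('a \<Rightarrow> 'b) set"
  where "homs X opX A opA =
    {\<phi> \<in> X \<rightarrow>\<^sub>E A. \<forall>a\<in>X. \<forall>b\<in>X. \<phi> (opX a b) = opA (\<phi> a) (\<phi> b)}"

definition ker_on :: "'a set \<Rightarrow> ('a \<Rightarrow> 'b) \<Rightarrow> ('a \<times> 'a) set" where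
  "ker_on X \<phi> = {(a, b) \<in> X \<times> X. \<phi> a = \<phi> b}"

definition homs_collapsing ::
    "'a set \<Rightarrow> ('a \<Rightarrow> 'a \<Rightarrow> 'a) \<Rightarrow> 'b set \<Rightarrow> ('b \<Rightarrow> 'b \<Rightarrow> 'b) \<Rightarrow> ('a \<times> 'a) set \<Rightarrow> ('a \<Rightarrow> 'b) set"
  where "homs_collapsing X opX A opA \<theta> = {\<phi> \<in> homs X opX A opA. \<theta> \<subseteq> ker_on X \<phi>}"

definition homs_with_kernel ::
    "'a set \<Rightarrow> ('a \<Rightarrow> 'a \<Rightarrow> 'a) \<Rightarrow> 'b set \<Rightarrow> ('b \<Rightarrow> 'b \<Rightarrow> 'b) \<Rightarrow> ('a \<times> 'a) set \<Rightarrow> ('a \<Rightarrow> 'b) set"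
  where "homs_with_kernel X opX A opA \<theta> = {\<phi> \<in> homs X opX A opA. ker_on X \<phi> = \<theta>}"

lemma rack_imp_magma: "rack R op \<Longrightarrow> magma R op"
  by (simp add: rack_def magma_def)

lemma prod_op_apply [simp]: "prod_op op1 op2 (a, b) (c, d) = (op1 a c, op2 b d)"
  by (simp add: prod_op_def)

lemma magma_prod: "magma A opA \<Longrightarrow> magma B opB \<Longrightarrow> magma (A \<times> B) (prod_op opA opB)"
  by (auto simp: magma_def)

lemma finite_homs: "finite X \<Longrightarrow> finite A \<Longrightarrow> finite (homs X opX A opA)"
  unfolding homs_def by (rule finite_subset[OF _ finite_PiE]) auto

lemma finite_homs_collapsing: "finite X \<Longrightarrow> finite A \<Longrightarrow> finite (homs_collapsing X opX A opA \<theta>)"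
  unfolding homs_collapsing_def by (auto intro: finite_subset[OF _ finite_homs])

lemma finite_homs_with_kernel: "finite X \<Longrightarrow> finite A \<Longrightarrow> finite (homs_with_kernel X opX A opA \<theta>)"
  unfolding homs_with_kernel_def by (auto intro: finite_subset[OF _ finite_homs])

lemma card_homs_collapsing_eq_sum:
  assumes "finite X" "finite A" "\<theta> \<subseteq> X \<times> X"
  shows "card (homs_collapsing X opX A opA \<theta>) =
    (\<Sum>\<theta>'\<in>{\<theta>'. \<theta> \<subseteq> \<theta>' \<and> \<theta>' \<subseteq> X \<times> X}. card (homs_with_kernel X opX A opA \<theta>'))"
proof -
  let ?I = "{\<theta>'. \<theta> \<subseteq> \<theta>' \<and> \<theta>' \<subseteq> X \<times> X}"
  have "homs_collapsing X opX A opA \<theta> = (\<Union>\<theta>'\<in>?I. homs_with_kernel X opX A opA \<theta>')"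
    unfolding homs_collapsing_def homs_with_kernel_def ker_on_def by auto
  moreover have "finite ?I"
    using assms(1) by (auto intro: finite_subset[of _ "Pow (X \<times> X)"])
  moreover have "\<forall>\<theta>\<^sub>1\<in>?I. \<forall>\<theta>\<^sub>2\<in>?I. \<theta>\<^sub>1 \<noteq> \<theta>\<^sub>2 \<longrightarrow>
      homs_with_kernel X opX A opA \<theta>\<^sub>1 \<inter> homs_with_kernel X opX A opA \<theta>\<^sub>2 = {}"
    by (auto simp: homs_with_kernel_def)
  ultimately show ?thesis
    by (simp add: card_UN_disjoint finite_homs_with_kernel assms(1,2))
qed

lemma card_homs_collapsing_prod:
  assumes "magma X opX"
  shows "card (homs_collapsing X opX (A \<times> B) (prod_op opA opB) \<theta>) =
    card (homs_collapsing X opX A opA \<theta>) * card (homs_collapsing X opX B opB \<theta>)"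
proof -
  let ?split = "\<lambda>\<phi>. (restrict (fst \<circ> \<phi>) X, restrict (snd \<circ> \<phi>) X)"
  let ?pair = "\<lambda>(\<phi>\<^sub>1, \<phi>\<^sub>2). restrict (\<lambda>x. (\<phi>\<^sub>1 x, \<phi>\<^sub>2 x)) X"
  have "bij_betw ?split (homs_collapsing X opX (A \<times> B) (prod_op opA opB) \<theta>)
      (homs_collapsing X opX A opA \<theta> \<times> homs_collapsing X opX B opB \<theta>)"
  proof (rule bij_betw_byWitness[where f' = ?pair])
    show "\<forall>\<phi>\<in>homs_collapsing X opX (A \<times> B) (prod_op opA opB) \<theta>. ?pair (?split \<phi>) = \<phi>"
      by (auto simp: homs_collapsing_def homs_def fun_eq_iff PiE_def extensional_def)
    show "\<forall>\<psi>\<in>homs_collapsing X opX A opA \<theta> \<times> homs_collapsing X opX B opB \<theta>. ?split (?pair \<psi>) = \<psi>"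
      by (auto simp: homs_collapsing_def homs_def fun_eq_iff PiE_def extensional_def)
    show "?split ` homs_collapsing X opX (A \<times> B) (prod_op opA opB) \<theta>
        \<subseteq> homs_collapsing X opX A opA \<theta> \<times> homs_collapsing X opX B opB \<theta>"
      using assms by (fastforce simp: homs_collapsing_def homs_def ker_on_def magma_def prod_op_def split: prod.splits)
    show "?pair ` (homs_collapsing X opX A opA \<theta> \<times> homs_collapsing X opX B opB \<theta>)
        \<subseteq> homs_collapsing X opX (A \<times> B) (prod_op opA opB) \<theta>"
      using assms by (fastforce simp: homs_collapsing_def homs_def ker_on_def magma_def)
  qed
  then show ?thesis
    by (simp add: bij_betw_same_card card_cartesian_product)
qed

lemma card_homs_collapsing_mono:
  assumes "magma X opX" "finite X" "finite B"
    and "inj_on f A" "f ` A \<subseteq> B" "\<forall>a\<in>A. \<forall>b\<in>A. f (opA a b) = opB (f a) (f b)"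
  shows "card (homs_collapsing X opX A opA \<theta>) \<le> card (homs_collapsing X opX B opB \<theta>)"
proof (rule card_inj_on_le[OF _ _ finite_homs_collapsing[OF assms(2,3)]])
  show "inj_on (\<lambda>\<phi>. restrict (f \<circ> \<phi>) X) (homs_collapsing X opX A opA \<theta>)"
  proof (rule inj_onI)
    fix \<phi> \<psi>
    assume "\<phi> \<in> homs_collapsing X opX A opA \<theta>" "\<psi> \<in> homs_collapsing X opX A opA \<theta>"
      and eq: "restrict (f \<circ> \<phi>) X = restrict (f \<circ> \<psi>) X"
    then have "\<phi> \<in> X \<rightarrow>\<^sub>E A" "\<psi> \<in> X \<rightarrow>\<^sub>E A"
      by (auto simp: homs_collapsing_def homs_def)
    moreover have "f (\<phi> x) = f (\<psi> x)" if "x \<in> X" for x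
      using fun_cong[OF eq, of x] that by simp
    ultimately show "\<phi> = \<psi>"
      using assms(4) by (intro PiE_ext) (auto dest: inj_onD)
  qed
  show "(\<lambda>\<phi>. restrict (f \<circ> \<phi>) X) ` homs_collapsing X opX A opA \<theta> \<subseteq> homs_collapsing X opX B opB \<theta>"
  proof (rule image_subsetI)
    fix \<phi> assume "\<phi> \<in> homs_collapsing X opX A opA \<theta>"
    then have "\<forall>x\<in>X. \<phi> x \<in> A" "\<forall>a\<in>X. \<forall>b\<in>X. \<phi> (opX a b) = opA (\<phi> a) (\<phi> b)"
      "\<theta> \<subseteq> ker_on X \<phi>"
      by (auto simp: homs_collapsing_def homs_def)
    then show "restrict (f \<circ> \<phi>) X \<in> homs_collapsing X opX B opB \<theta>"
      using assms(1,5,6) by (auto simp: homs_collapsing_def homs_def ker_on_def magma_def)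
  qed
qed

lemma rack_iso_inv_into:
  assumes "rack_iso A opA B opB f" "magma A opA"
  shows "rack_iso B opB A opA (inv_into A f)"
proof -
  have bij: "bij_betw f A B" and hom: "\<forall>a\<in>A. \<forall>b\<in>A. f (opA a b) = opB (f a) (f b)"
    using assms(1) by (auto simp: rack_iso_def)
  have "inv_into A f (opB a b) = opA (inv_into A f a) (inv_into A f b)" if "a \<in> B" "b \<in> B" for a b
  proof -
    let ?a = "inv_into A f a" and ?b = "inv_into A f b"
    have "?a \<in> A" "?b \<in> A" "f ?a = a" "f ?b = b"
      using that bij by (auto simp: bij_betw_def inv_into_into f_inv_into_f)
    then show ?thesis
      using hom assms(2) bij by (metis bij_betw_inv_into_left magma_def)
  qed
  then show ?thesis
    using bij_betw_inv_into[OF bij] by (simp add: rack_iso_def)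
qed

lemma card_homs_collapsing_iso:
  assumes "rack_iso A opA B opB f" "magma A opA" "magma X opX" "finite X" "finite A" "finite B"
  shows "card (homs_collapsing X opX A opA \<theta>) = card (homs_collapsing X opX B opB \<theta>)"
proof (rule antisym)
  show "card (homs_collapsing X opX A opA \<theta>) \<le> card (homs_collapsing X opX B opB \<theta>)"
    using assms(1,3,4,6) by (intro card_homs_collapsing_mono) (auto simp: rack_iso_def bij_betw_def)
  show "card (homs_collapsing X opX B opB \<theta>) \<le> card (homs_collapsing X opX A opA \<theta>)"
    using rack_iso_inv_into[OF assms(1,2)] assms(3-5)
    by (intro card_homs_collapsing_mono) (auto simp: rack_iso_def bij_betw_def)
qed

lemma card_homs_with_kernel_eq:
  assumes "finite X" "finite A" "finite B"
    and collapsing_eq: "\<And>\<theta>. \<theta> \<subseteq> X \<times> X \<Longrightarrow>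
      card (homs_collapsing X opX A opA \<theta>) = card (homs_collapsing X opX B opB \<theta>)"
    and "\<theta> \<subseteq> X \<times> X"
  shows "card (homs_with_kernel X opX A opA \<theta>) = card (homs_with_kernel X opX B opB \<theta>)"
  using assms(5)
proof (induction "card (X \<times> X - \<theta>)" arbitrary: \<theta> rule: less_induct)
  case less
  let ?I = "{\<theta>'. \<theta> \<subseteq> \<theta>' \<and> \<theta>' \<subseteq> X \<times> X}"
  have "finite ?I"
    using assms(1) by (auto intro: finite_subset[of _ "Pow (X \<times> X)"])
  have "\<theta> \<in> ?I"
    using less.prems by simp
  have coarser_eq: "card (homs_with_kernel X opX A opA \<theta>') = card (homs_with_kernel X opX B opB \<theta>')"
    if "\<theta>' \<in> ?I - {\<theta>}" for \<theta>'
  proof -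
    have "X \<times> X - \<theta>' \<subset> X \<times> X - \<theta>"
      using that less.prems by auto
    then have "card (X \<times> X - \<theta>') < card (X \<times> X - \<theta>)"
      using assms(1) by (intro psubset_card_mono) auto
    then show ?thesis
      using less.hyps that by simp
  qed
  have split_off: "card (homs_collapsing X opX C opC \<theta>) = card (homs_with_kernel X opX C opC \<theta>) +
      (\<Sum>\<theta>'\<in>?I - {\<theta>}. card (homs_with_kernel X opX C opC \<theta>'))" if "finite C" for C opC
    using card_homs_collapsing_eq_sum[OF assms(1) that less.prems] sum.remove[OF \<open>finite ?I\<close> \<open>\<theta> \<in> ?I\<close>]
    by simp
  have "(\<Sum>\<theta>'\<in>?I - {\<theta>}. card (homs_with_kernel X opX A opA \<theta>')) =
      (\<Sum>\<theta>'\<in>?I - {\<theta>}. card (homs_with_kernel X opX B opB \<theta>'))"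
    by (rule sum.cong[OF refl coarser_eq])
  then show ?case
    using split_off[OF assms(2)] split_off[OF assms(3)] collapsing_eq[OF less.prems] by simp
qed

lemma card_homs_collapsing_cancel:
  assumes "magma X opX" "magma A opA" "magma C opC" "finite X" "finite A" "finite B" "finite C"
    and "c \<in> C" "opC c c = c"
    and "rack_iso (A \<times> C) (prod_op opA opC) (B \<times> C) (prod_op opB opC) f"
    and "\<theta> \<subseteq> X \<times> X"
  shows "card (homs_collapsing X opX A opA \<theta>) = card (homs_collapsing X opX B opB \<theta>)"
proof -
  have "card (homs_collapsing X opX (A \<times> C) (prod_op opA opC) \<theta>) =
      card (homs_collapsing X opX (B \<times> C) (prod_op opB opC) \<theta>)"
    using assms(4-7) by (intro card_homs_collapsing_iso[OF assms(10) magma_prod[OF assms(2,3)] assms(1)]) auto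
  then have "card (homs_collapsing X opX A opA \<theta>) * card (homs_collapsing X opX C opC \<theta>) =
      card (homs_collapsing X opX B opB \<theta>) * card (homs_collapsing X opX C opC \<theta>)"
    by (simp only: card_homs_collapsing_prod[OF assms(1)])
  moreover have "restrict (\<lambda>_. c) X \<in> homs_collapsing X opX C opC \<theta>"
    using assms(1,8,9,11) by (auto simp: homs_collapsing_def homs_def ker_on_def magma_def)
  then have "card (homs_collapsing X opX C opC \<theta>) \<noteq> 0"
    using finite_homs_collapsing[OF assms(4,7)] by auto
  ultimately show ?thesis
    by simp
qed

lemma rack_iso_prod_cancel:
  assumes "magma A opA" "magma C opC" "finite A" "finite B" "finite C"
    and "c \<in> C" "opC c c = c"
    and "rack_iso (A \<times> C) (prod_op opA opC) (B \<times> C) (prod_op opB opC) f"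
  shows "\<exists>g. rack_iso A opA B opB g"
proof -
  have "card (homs_with_kernel A opA A opA (Id_on A)) = card (homs_with_kernel A opA B opB (Id_on A))"
    using assms by (intro card_homs_with_kernel_eq card_homs_collapsing_cancel) auto
  moreover have "restrict id A \<in> homs_with_kernel A opA A opA (Id_on A)"
    using assms(1) by (auto simp: homs_with_kernel_def homs_def ker_on_def magma_def)
  ultimately have "card (homs_with_kernel A opA B opB (Id_on A)) \<noteq> 0"
    using finite_homs_with_kernel[OF assms(3,3), of opA opA "Id_on A"] by (metis card_0_eq empty_iff)
  then obtain g where "g \<in> homs_with_kernel A opA B opB (Id_on A)"
    by (metis card.empty ex_in_conv)
  then have inj: "inj_on g A" and "g ` A \<subseteq> B" and hom: "\<forall>a\<in>A. \<forall>b\<in>A. g (opA a b) = opB (g a) (g b)"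
    by (auto simp: homs_with_kernel_def homs_def ker_on_def inj_on_def)
  moreover have "card (A \<times> C) = card (B \<times> C)"
    using assms(8) by (auto simp: rack_iso_def dest: bij_betw_same_card)
  then have "card A = card B"
    using assms(5,6) by (auto simp: card_cartesian_product)
  ultimately have "bij_betw g A B"
    using assms(4) by (simp add: bij_betw_def card_image card_subset_eq)
  then show ?thesis
    using hom by (auto simp: rack_iso_def)
qed

theorem theorem7p1:
  fixes R :: "'a set" and opR :: "'a \<Rightarrow> 'a \<Rightarrow> 'a"
    and S :: "'b set" and opS :: "'b \<Rightarrow> 'b \<Rightarrow> 'b"
    and T :: "'c set" and opT :: "'c \<Rightarrow> 'c \<Rightarrow> 'c"
  assumes "finite R" and "connected_rack R opR"
    and "finite S" and "connected_rack S opS"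
    and "finite T" and "rack T opT"
    and "t \<in> T" and "opT t t = t"
    and "\<exists>f. rack_iso (R \<times> T) (prod_op opR opT) (S \<times> T) (prod_op opS opT) f"
  shows "\<exists>g. rack_iso R opR S opS g"
proof -
  have "magma R opR" "magma T opT"
    using assms(2,6) by (auto simp: connected_rack_def intro: rack_imp_magma)
  moreover obtain f where "rack_iso (R \<times> T) (prod_op opR opT) (S \<times> T) (prod_op opS opT) f"
    using assms(9) by blast
  ultimately show ?thesis
    using assms(1,3,5,7,8) by (intro rack_iso_prod_cancel)
qed

end
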